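(* There is an infinite family of undirected graphs (with unit edge lengths) such that, with $n$ the number of vertices, the minimum size of a hierarchical hub labeling is $\Omega(\sqrt n)$ times larger than the minimum size of a hub labeling.
   Context: A hub labeling of an undirected graph $G=(V,E)$, $n=|V|$, assigns to each vertex $v$ a set $L(v)\subseteq V$ such that for every pair $u,w$ (including $u=w$), $L(u)\cap L(w)$ contains a vertex on some shortest $u$–$w$ path; its size is $\sum_v|L(v)|$. It is hierarchical if there is a bijection $\pi:V\to\{1,\dots,n\}$ such that $u\in L(v)$ implies $\pi(u)\le\pi(v)$. *)

theory Defs
  imports Complex_Main
begin

text \<open>An undirected graph with unit edge lengths: finite vertex set V and a symmetric,
irreflexive adjacency relation E (only edges inside V matter).\<close>

definition undirected_graph :: "'a set \<Rightarrow> ('a \<Rightarrow> 'a \<Rightarrow> bool) \<Rightarrow> bool" where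
  "undirected_graph V E \<longleftrightarrow> finite V \<and> (\<forall>u v. E u v \<longrightarrow> E v u) \<and> (\<forall>v. \<not> E v v)"

text \<open>A path from u to w: a nonempty list of distinct vertices of V, consecutive ones adjacent.
Its length (number of edges, unit edge lengths) is length p - 1.\<close>

definition is_path :: "'a set \<Rightarrow> ('a \<Rightarrow> 'a \<Rightarrow> bool) \<Rightarrow> 'a \<Rightarrow> 'a \<Rightarrow> 'a list \<Rightarrow> bool" where
  "is_path V E u w p \<longleftrightarrow> p \<noteq> [] \<and> set p \<subseteq> V \<and> distinct p \<and> hd p = u \<and> last p = w \<and>
     (\<forall>i. Suc i < length p \<longrightarrow> E (p ! i) (p ! Suc i))"

definition shortest_path :: "'a set \<Rightarrow> ('a \<Rightarrow> 'a \<Rightarrow> bool) \<Rightarrow> 'a \<Rightarrow> 'a \<Rightarrow> 'a list \<Rightarrow> bool" where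
  "shortest_path V E u w p \<longleftrightarrow> is_path V E u w p \<and>
     (\<forall>q. is_path V E u w q \<longrightarrow> length p \<le> length q)"

definition connected_graph :: "'a set \<Rightarrow> ('a \<Rightarrow> 'a \<Rightarrow> bool) \<Rightarrow> bool" where
  "connected_graph V E \<longleftrightarrow> (\<forall>u\<in>V. \<forall>w\<in>V. \<exists>p. is_path V E u w p)"

definition hub_labeling :: "'a set \<Rightarrow> ('a \<Rightarrow> 'a \<Rightarrow> bool) \<Rightarrow> ('a \<Rightarrow> 'a set) \<Rightarrow> bool" where
  "hub_labeling V E L \<longleftrightarrow> (\<forall>v\<in>V. L v \<subseteq> V) \<and>
     (\<forall>u\<in>V. \<forall>w\<in>V. \<exists>x \<in> L u \<inter> L w. \<exists>p. shortest_path V E u w p \<and> x \<in> set p)"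

definition hl_size :: "'a set \<Rightarrow> ('a \<Rightarrow> 'a set) \<Rightarrow> nat" where
  "hl_size V L = (\<Sum>v\<in>V. card (L v))"

definition hierarchical :: "'a set \<Rightarrow> ('a \<Rightarrow> 'a set) \<Rightarrow> bool" where
  "hierarchical V L \<longleftrightarrow> (\<exists>\<pi>. bij_betw \<pi> V {1..card V} \<and> (\<forall>v\<in>V. \<forall>u\<in>L v. \<pi> u \<le> \<pi> v))"

definition min_hl_size :: "'a set \<Rightarrow> ('a \<Rightarrow> 'a \<Rightarrow> bool) \<Rightarrow> nat" where
  "min_hl_size V E = (LEAST s. \<exists>L. hub_labeling V E L \<and> hl_size V L = s)"

definition min_hhl_size :: "'a set \<Rightarrow> ('a \<Rightarrow> 'a \<Rightarrow> bool) \<Rightarrow> nat" where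
  "min_hhl_size V E = (LEAST s. \<exists>L. hub_labeling V E L \<and> hierarchical V L \<and> hl_size V L = s)"

end

theory Submission
  imports Defs
begin

text \<open>
  The witnesses are the rook graphs: the vertices are the cells of a k x k board, two cells being
  adjacent when they share a row or a column, so n = k^2. This graph has diameter two, hence the
  closed neighbourhoods, each of size at most 2k, form a hub labeling of total size O(k^3).

  Now let L be hierarchical with respect to an order \<pi>, and let x, y be cells in different rows
  and columns, spanning the rectangle with corners x, y, a, b. The only shortest x-y paths are
  x a y and x b y, so if y is the \<pi>-least of the four corners then the common hub of x and y, which
  lies in L y and therefore is not above y, must be y itself: y \<in> L x. Each of the k^2 (k-1)^2 / 4
  rectangles has a \<pi>-least corner and so contributes an entry to the labels, whence every
  hierarchical hub labeling has size at least k^2 (k-1)^2 / 4, a factor \<Omega>(k) = \<Omega>(\<surd>n) more.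
\<close>

section \<open>Shortest paths and hub labelings\<close>

lemma is_path_length_1: "is_path V E u w p \<Longrightarrow> length p = 1 \<Longrightarrow> u = w"
  unfolding is_path_def by (cases p) auto

lemma is_path_length_2: "is_path V E u w p \<Longrightarrow> length p = 2 \<Longrightarrow> E u w"
  unfolding is_path_def by (auto simp: length_Suc_conv numeral_2_eq_2)

lemma is_path_length_3:
  "is_path V E u w p \<Longrightarrow> length p = 3 \<Longrightarrow> \<exists>c. p = [u, c, w] \<and> E u c \<and> E c w"
  unfolding is_path_def by (auto simp: length_Suc_conv numeral_3_eq_3 less_Suc_eq)

lemma shortest_path_exists: "is_path V E u w p \<Longrightarrow> \<exists>q. shortest_path V E u w q"
  unfolding shortest_path_def by (rule ex_has_least_nat[where m = length])

lemma shortest_path_refl: "u \<in> V \<Longrightarrow> shortest_path V E u u [u]"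
  unfolding shortest_path_def is_path_def by (auto simp: Suc_le_eq)

lemma shortest_path_edge:
  assumes "u \<in> V" "w \<in> V" "u \<noteq> w" "E u w"
  shows "shortest_path V E u w [u, w]"
  unfolding shortest_path_def
proof
  show "is_path V E u w [u, w]"
    using assms unfolding is_path_def by (auto simp: less_Suc_eq)
  show "\<forall>q. is_path V E u w q \<longrightarrow> length [u, w] \<le> length q"
  proof (intro allI impI)
    fix q assume q: "is_path V E u w q"
    then have "length q \<noteq> 0" "length q \<noteq> 1"
      using is_path_length_1[OF q] \<open>u \<noteq> w\<close> unfolding is_path_def by auto
    then show "length [u, w] \<le> length q" by (simp only: list.size)
  qed
qed

lemma shortest_path_two_steps:
  assumes "u \<in> V" "c \<in> V" "w \<in> V" "distinct [u, c, w]" "E u c" "E c w" "\<not> E u w"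
  shows "shortest_path V E u w [u, c, w]"
  unfolding shortest_path_def
proof
  show "is_path V E u w [u, c, w]"
    using assms unfolding is_path_def by (auto simp: less_Suc_eq)
  show "\<forall>q. is_path V E u w q \<longrightarrow> length [u, c, w] \<le> length q"
  proof (intro allI impI)
    fix q assume q: "is_path V E u w q"
    then have "length q \<noteq> 0" "length q \<noteq> 1" "length q \<noteq> 2"
      using is_path_length_1[OF q] is_path_length_2[OF q] assms(4,7) unfolding is_path_def by auto
    then show "length [u, c, w] \<le> length q" by (simp only: list.size)
  qed
qed

lemma shortest_path_through_common_neighbour:
  assumes "shortest_path V E u w p" "u \<noteq> w" "\<not> E u w" "is_path V E u w [u, c, w]"
  shows "\<exists>c'. p = [u, c', w] \<and> E u c' \<and> E c' w"
proof -
  have p: "is_path V E u w p" and "length p \<le> 3"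
    using assms(1,4) unfolding shortest_path_def by force+
  moreover have "length p \<noteq> 0" "length p \<noteq> 1" "length p \<noteq> 2"
    using p is_path_length_1[OF p] is_path_length_2[OF p] assms(2,3) unfolding is_path_def by auto
  ultimately have "length p = 3"
    by linarith
  then show ?thesis
    using is_path_length_3[OF p] by blast
qed

lemma hub_labeling_imp_connected: "hub_labeling V E L \<Longrightarrow> connected_graph V E"
  unfolding hub_labeling_def connected_graph_def shortest_path_def by blast

lemma min_hl_size_le_hl_size: "hub_labeling V E L \<Longrightarrow> min_hl_size V E \<le> hl_size V L"
  unfolding min_hl_size_def by (rule Least_le) blast

lemma min_hhl_size_attained:
  assumes "hub_labeling V E L\<^sub>0" "hierarchical V L\<^sub>0"
  obtains L where "hub_labeling V E L" "hierarchical V L" "hl_size V L = min_hhl_size V E"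
proof -
  have "\<exists>L. hub_labeling V E L \<and> hierarchical V L \<and> hl_size V L = min_hhl_size V E"
    unfolding min_hhl_size_def by (rule LeastI_ex) (use assms in blast)
  then show ?thesis
    using that by blast
qed

lemma card_Sigma_eq_hl_size:
  assumes "finite V" "\<forall>v\<in>V. L v \<subseteq> V"
  shows "card (Sigma V L) = hl_size V L"
  unfolding hl_size_def using assms by (intro card_SigmaI) (auto intro: finite_subset)

lemma mem_label_if_least_on_shortest_paths:
  fixes \<pi> :: "'a \<Rightarrow> 'b::linorder"
  assumes "hub_labeling V E L" and "\<forall>v\<in>V. \<forall>x\<in>L v. \<pi> x \<le> \<pi> v" and "u \<in> V" "w \<in> V"
    and "\<And>p x. shortest_path V E u w p \<Longrightarrow> x \<in> set p \<Longrightarrow> x \<noteq> w \<Longrightarrow> \<pi> w < \<pi> x"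
  shows "w \<in> L u"
proof -
  obtain h p where h: "h \<in> L u" "h \<in> L w" "shortest_path V E u w p" "h \<in> set p"
    using assms(1,3,4) unfolding hub_labeling_def by blast
  have "\<pi> h \<le> \<pi> w"
    using assms(2,4) h(2) by blast
  then have "h = w"
    using assms(5)[OF h(3,4)] by force
  then show ?thesis
    using h(1) by simp
qed

lemma atMost_hierarchical_hub_labeling:
  fixes n :: nat
  assumes "connected_graph {0..<n} E"
  shows "hub_labeling {0..<n} E atMost" "hierarchical {0..<n} atMost"
proof -
  show "hub_labeling {0..<n} E atMost"
    unfolding hub_labeling_def
  proof (intro conjI ballI)
    fix u w assume "u \<in> {0..<n}" "w \<in> {0..<n}"
    then obtain p where p: "shortest_path {0..<n} E u w p"
      using assms shortest_path_exists unfolding connected_graph_def by meson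
    then have "u \<in> set p" "w \<in> set p"
      unfolding shortest_path_def is_path_def by (metis hd_in_set last_in_set)+
    then have "min u w \<in> {..u} \<inter> {..w} \<and> min u w \<in> set p"
      by (auto simp: min_def)
    then show "\<exists>x\<in>{..u} \<inter> {..w}. \<exists>p. shortest_path {0..<n} E u w p \<and> x \<in> set p"
      using p by blast
  qed auto
  have "bij_betw Suc {0..<n} {1..card {0..<n}}"
    by (simp add: bij_betw_def image_Suc_atLeastLessThan atLeastLessThanSuc_atLeastAtMost)
  then show "hierarchical {0..<n} atMost"
    unfolding hierarchical_def by (intro exI[of _ Suc]) auto
qed

definition diameter_le_two :: "'a set \<Rightarrow> ('a \<Rightarrow> 'a \<Rightarrow> bool) \<Rightarrow> bool" where
  "diameter_le_two V E \<longleftrightarrow> (\<forall>u\<in>V. \<forall>w\<in>V. u = w \<or> E u w \<or> (\<exists>c\<in>V. E u c \<and> E c w))"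

definition closed_nbhd :: "'a set \<Rightarrow> ('a \<Rightarrow> 'a \<Rightarrow> bool) \<Rightarrow> 'a \<Rightarrow> 'a set" where
  "closed_nbhd V E v = {x \<in> V. x = v \<or> E v x}"

lemma closed_nbhd_hub_labeling:
  assumes G: "undirected_graph V E" and diam: "diameter_le_two V E"
  shows "hub_labeling V E (closed_nbhd V E)"
  unfolding hub_labeling_def
proof (intro conjI ballI)
  fix u w assume u: "u \<in> V" and w: "w \<in> V"
  have sym: "E x y \<Longrightarrow> E y x" and irrefl: "\<not> E x x" for x y
    using G unfolding undirected_graph_def by blast+
  let ?hub = "\<lambda>x p. x \<in> closed_nbhd V E u \<inter> closed_nbhd V E w \<and> shortest_path V E u w p \<and> x \<in> set p"
  consider "u = w" | "E u w" | c where "u \<noteq> w" "\<not> E u w" "c \<in> V" "E u c" "E c w"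
    using diam u w unfolding diameter_le_two_def by blast
  then have "\<exists>x p. ?hub x p"
  proof cases
    case 1
    then have "?hub u [u]"
      using u shortest_path_refl unfolding closed_nbhd_def by fastforce
    then show ?thesis by blast
  next
    case 2
    then have "?hub w [u, w]"
      using u w irrefl shortest_path_edge unfolding closed_nbhd_def by fastforce
    then show ?thesis by blast
  next
    case 3
    then have "distinct [u, c, w]"
      using irrefl by auto
    then have "shortest_path V E u w [u, c, w]"
      using 3 u w by (intro shortest_path_two_steps)
    then have "?hub c [u, c, w]"
      using 3 sym unfolding closed_nbhd_def by auto
    then show ?thesis by blast
  qed
  then show "\<exists>x\<in>closed_nbhd V E u \<inter> closed_nbhd V E w. \<exists>p. shortest_path V E u w p \<and> x \<in> set p"
    by blast
qed (auto simp: closed_nbhd_def)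

section \<open>The rook graph\<close>

text \<open>Vertex v is the cell (v div k, v mod k) of the k x k board.\<close>

definition rook :: "nat \<Rightarrow> nat \<Rightarrow> nat \<Rightarrow> bool" where
  "rook k u v \<longleftrightarrow> u \<noteq> v \<and> (u div k = v div k \<or> u mod k = v mod k)"

definition rook_corner :: "nat \<Rightarrow> nat \<Rightarrow> nat \<Rightarrow> nat" where
  "rook_corner k u w = u div k * k + w mod k"

lemma rook_corner_div [simp]: "0 < k \<Longrightarrow> rook_corner k u w div k = u div k"
  by (simp add: rook_corner_def)

lemma rook_corner_mod [simp]: "0 < k \<Longrightarrow> rook_corner k u w mod k = w mod k"
  by (simp add: rook_corner_def)

lemma rook_corner_corner [simp]:
  "0 < k \<Longrightarrow> rook_corner k (rook_corner k x y) (rook_corner k y x) = x"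
  by (simp add: rook_corner_def)

lemma nat_eq_if_div_mod_eq: "x div k = y div k \<Longrightarrow> x mod k = y mod k \<Longrightarrow> x = (y::nat)"
  by (metis div_mult_mod_eq)

lemma cell_less_square:
  assumes "a < k" "b < k"
  shows "a * k + b < k * (k::nat)"
proof -
  have "a * k + b < a * k + k"
    using \<open>b < k\<close> by simp
  also have "\<dots> = (a + 1) * k"
    by simp
  also have "\<dots> \<le> k * k"
    using \<open>a < k\<close> by (intro mult_le_mono1) simp
  finally show ?thesis .
qed

lemma rook_corner_less: "0 < k \<Longrightarrow> u < k * k \<Longrightarrow> rook_corner k u w < k * k"
  unfolding rook_corner_def by (simp add: cell_less_square less_mult_imp_div_less)

lemma undirected_graph_rook: "undirected_graph {0..<k * k} (rook k)"
  unfolding undirected_graph_def rook_def by auto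

lemma rook_to_corner: "0 < k \<Longrightarrow> u mod k \<noteq> w mod k \<Longrightarrow> rook k u (rook_corner k u w)"
  unfolding rook_def by (metis rook_corner_div rook_corner_mod)

lemma rook_from_corner: "0 < k \<Longrightarrow> u div k \<noteq> w div k \<Longrightarrow> rook k (rook_corner k u w) w"
  unfolding rook_def by (metis rook_corner_div rook_corner_mod)

lemma diameter_le_two_rook:
  assumes "0 < k"
  shows "diameter_le_two {0..<k * k} (rook k)"
  unfolding diameter_le_two_def
proof (intro ballI)
  fix u w assume "u \<in> {0..<k * k}" "w \<in> {0..<k * k}"
  moreover have "rook k u (rook_corner k u w) \<and> rook k (rook_corner k u w) w"
    if "u \<noteq> w" "\<not> rook k u w"
  proof -
    have "u div k \<noteq> w div k" "u mod k \<noteq> w mod k"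
      using that unfolding rook_def by auto
    then show ?thesis
      using assms rook_to_corner rook_from_corner by blast
  qed
  ultimately show "u = w \<or> rook k u w \<or> (\<exists>c\<in>{0..<k * k}. rook k u c \<and> rook k c w)"
    using assms rook_corner_less by auto
qed

lemma rook_common_neighbour:
  assumes "0 < k" "rook k u c" "rook k c w" "u div k \<noteq> w div k" "u mod k \<noteq> w mod k"
  shows "c = rook_corner k u w \<or> c = rook_corner k w u"
proof (cases "c div k = u div k")
  case True
  then have "c mod k = w mod k"
    using assms(3,4) unfolding rook_def by auto
  then have "c = rook_corner k u w"
    using True assms(1) nat_eq_if_div_mod_eq[of c k "rook_corner k u w"] by simp
  then show ?thesis ..
next
  case False
  then have "c mod k = u mod k" "c div k = w div k"
    using assms(2,3,5) unfolding rook_def by auto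
  then have "c = rook_corner k w u"
    using assms(1) nat_eq_if_div_mod_eq[of c k "rook_corner k w u"] by simp
  then show ?thesis ..
qed

definition rook_rectangle :: "nat \<Rightarrow> nat \<Rightarrow> nat \<Rightarrow> nat set" where
  "rook_rectangle k x y = {x, y, rook_corner k x y, rook_corner k y x}"

lemma rook_shortest_path_in_rectangle:
  assumes "0 < k" "x < k * k" "y < k * k" "x div k \<noteq> y div k" "x mod k \<noteq> y mod k"
    and "shortest_path {0..<k * k} (rook k) x y p"
  shows "set p \<subseteq> rook_rectangle k x y"
proof -
  let ?c = "rook_corner k x y"
  have "?c < k * k" "distinct [x, ?c, y]" "rook k x ?c" "rook k ?c y" "\<not> rook k x y"
    using assms rook_corner_less rook_to_corner rook_from_corner unfolding rook_def by auto
  then have "shortest_path {0..<k * k} (rook k) x y [x, ?c, y]"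
    using assms(2,3) by (intro shortest_path_two_steps) auto
  then have "is_path {0..<k * k} (rook k) x y [x, ?c, y]"
    unfolding shortest_path_def by blast
  then obtain c where "p = [x, c, y]" "rook k x c" "rook k c y"
    using shortest_path_through_common_neighbour[OF assms(6)] assms(4) \<open>\<not> rook k x y\<close> by blast
  then show ?thesis
    using rook_common_neighbour assms(1,4,5) unfolding rook_rectangle_def by auto
qed

lemma card_closed_nbhd_rook:
  assumes "0 < k"
  shows "card (closed_nbhd {0..<k * k} (rook k) v) \<le> 2 * k"
proof -
  let ?row = "(\<lambda>j. v div k * k + j) ` {..<k}" and ?col = "(\<lambda>i. i * k + v mod k) ` {..<k}"
  have "closed_nbhd {0..<k * k} (rook k) v \<subseteq> ?row \<union> ?col"
  proof
    fix x assume x: "x \<in> closed_nbhd {0..<k * k} (rook k) v"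
    have "x = x div k * k + x mod k" "x div k < k" "x mod k < k"
      using x assms by (simp_all add: closed_nbhd_def less_mult_imp_div_less)
    moreover have "x div k = v div k \<or> x mod k = v mod k"
      using x unfolding closed_nbhd_def rook_def by auto
    ultimately show "x \<in> ?row \<union> ?col"
      by (metis (no_types, lifting) UnI1 UnI2 image_eqI lessThan_iff)
  qed
  then have "card (closed_nbhd {0..<k * k} (rook k) v) \<le> card (?row \<union> ?col)"
    by (intro card_mono) auto
  also have "\<dots> \<le> card ?row + card ?col"
    by (rule card_Un_le)
  also have "\<dots> \<le> 2 * k"
    using card_image_le[of "{..<k}", simplified] by (metis add_mono mult_2)
  finally show ?thesis .
qed

lemma min_hl_size_rook_le:
  assumes "0 < k"
  shows "min_hl_size {0..<k * k} (rook k) \<le> 2 * k ^ 3"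
proof -
  have "min_hl_size {0..<k * k} (rook k) \<le> hl_size {0..<k * k} (closed_nbhd {0..<k * k} (rook k))"
    using closed_nbhd_hub_labeling[OF undirected_graph_rook diameter_le_two_rook[OF assms]]
    by (rule min_hl_size_le_hl_size)
  also have "\<dots> \<le> card {0..<k * k} * (2 * k)"
    unfolding hl_size_def using card_closed_nbhd_rook[OF assms]
    by (metis of_nat_id sum_bounded_above)
  also have "\<dots> = 2 * k ^ 3"
    by (simp add: power3_eq_cube)
  finally show ?thesis .
qed

section \<open>Hierarchical labelings of the rook graph\<close>

definition rook_diagonals :: "nat \<Rightarrow> (nat \<times> nat) set" where
  "rook_diagonals k = {(x, y). x < k * k \<and> y < k * k \<and> x div k \<noteq> y div k \<and> x mod k \<noteq> y mod k}"

lemma card_rook_diagonals: "card (rook_diagonals k) = (k * (k - 1)) ^ 2"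
proof -
  define R where "R = (SIGMA a:{..<k}. {..<k} - {a})"
  define cells where "cells = (\<lambda>(x, y). ((x div k, y div k), (x mod k, y mod k)))"
  have "bij_betw cells (rook_diagonals k) (R \<times> R)"
  proof (rule bij_betw_imageI)
    show "inj_on cells (rook_diagonals k)"
      unfolding cells_def by (rule inj_onI) (auto intro: nat_eq_if_div_mod_eq)
    show "cells ` rook_diagonals k = R \<times> R"
    proof
      show "cells ` rook_diagonals k \<subseteq> R \<times> R"
        unfolding cells_def rook_diagonals_def R_def
        by (auto simp: less_mult_imp_div_less intro!: mod_less_divisor Nat.gr0I)
      show "R \<times> R \<subseteq> cells ` rook_diagonals k"
      proof (clarify)
        fix a c b d assume "(a, c) \<in> R" "(b, d) \<in> R"
        then have "a < k" "c < k" "b < k" "d < k" "a \<noteq> c" "b \<noteq> d"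
          unfolding R_def by auto
        then have "(a * k + b, c * k + d) \<in> rook_diagonals k"
          "cells (a * k + b, c * k + d) = ((a, c), (b, d))"
          unfolding rook_diagonals_def cells_def by (auto simp: cell_less_square)
        then show "((a, c), (b, d)) \<in> cells ` rook_diagonals k"
          by (metis image_eqI)
      qed
    qed
  qed
  then have "card (rook_diagonals k) = card R * card R"
    by (simp add: bij_betw_same_card card_cartesian_product)
  moreover have "card R = k * (k - 1)"
    unfolding R_def by simp
  ultimately show ?thesis
    by (simp add: power2_eq_square)
qed

definition rook_flip :: "nat \<Rightarrow> nat \<times> nat \<Rightarrow> nat \<times> nat" where
  "rook_flip k = (\<lambda>(x, y). (rook_corner k x y, rook_corner k y x))"

text \<open>The four ordered pairs of opposite corners of a rectangle are the images of any one of
  them under these maps.\<close>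

definition rook_symmetries :: "nat \<Rightarrow> (nat \<times> nat \<Rightarrow> nat \<times> nat) set" where
  "rook_symmetries k = {id, prod.swap, rook_flip k, prod.swap \<circ> rook_flip k}"

lemma rook_symmetries_diagonals:
  "0 < k \<Longrightarrow> g \<in> rook_symmetries k \<Longrightarrow> z \<in> rook_diagonals k \<Longrightarrow> g z \<in> rook_diagonals k"
  by (auto simp: rook_symmetries_def rook_flip_def rook_diagonals_def rook_corner_less)

lemma rook_symmetries_involutive: "0 < k \<Longrightarrow> g \<in> rook_symmetries k \<Longrightarrow> g (g z) = z"
  by (auto simp: rook_symmetries_def rook_flip_def split: prod.split)

lemma rook_rectangle_symmetries:
  "0 < k \<Longrightarrow> g \<in> rook_symmetries k \<Longrightarrow>
    rook_rectangle k (fst (g (x, y))) (snd (g (x, y))) = rook_rectangle k x y"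
  by (auto simp: rook_symmetries_def rook_flip_def rook_rectangle_def)

lemma rook_rectangle_eq_snd_symmetries:
  "rook_rectangle k x y = (\<lambda>g. snd (g (x, y))) ` rook_symmetries k"
  by (auto simp: rook_rectangle_def rook_symmetries_def rook_flip_def)

definition rook_min_diagonals :: "nat \<Rightarrow> (nat \<Rightarrow> nat) \<Rightarrow> (nat \<times> nat) set" where
  "rook_min_diagonals k \<pi> =
     {(x, y) \<in> rook_diagonals k. \<forall>z \<in> rook_rectangle k x y. z \<noteq> y \<longrightarrow> \<pi> y < \<pi> z}"

lemma rook_diagonals_cover:
  assumes "0 < k" "inj_on \<pi> {0..<k * k}"
  shows "rook_diagonals k \<subseteq> (\<Union>g \<in> rook_symmetries k. g ` rook_min_diagonals k \<pi>)"
proof (rule subrelI)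
  fix x y assume xy: "(x, y) \<in> rook_diagonals k"
  let ?R = "rook_rectangle k x y"
  obtain m where "m \<in> ?R" and m_least: "\<forall>z\<in>?R. \<pi> m \<le> \<pi> z"
    using ex_has_least_nat[of "\<lambda>z. z \<in> ?R" x \<pi>] unfolding rook_rectangle_def by auto
  have "?R \<subseteq> {0..<k * k}"
    using xy assms(1) rook_corner_less unfolding rook_rectangle_def rook_diagonals_def by auto
  then have m_min: "\<forall>z\<in>?R. z \<noteq> m \<longrightarrow> \<pi> m < \<pi> z"
    using m_least \<open>m \<in> ?R\<close> assms(2) by (metis inj_on_eq_iff order_le_neq_trans subsetD)
  obtain g where g: "g \<in> rook_symmetries k" and "snd (g (x, y)) = m"
    using \<open>m \<in> ?R\<close> unfolding rook_rectangle_eq_snd_symmetries by blast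
  then have "g (x, y) \<in> rook_min_diagonals k \<pi>"
    using rook_symmetries_diagonals[OF assms(1) g xy] rook_rectangle_symmetries[OF assms(1) g, of x y]
      m_min
    unfolding rook_min_diagonals_def by (cases "g (x, y)") auto
  then have "(x, y) \<in> g ` rook_min_diagonals k \<pi>"
    using rook_symmetries_involutive[OF assms(1) g] by (metis image_eqI)
  with g show "(x, y) \<in> (\<Union>g \<in> rook_symmetries k. g ` rook_min_diagonals k \<pi>)"
    by blast
qed

lemma rook_min_diagonals_in_labels:
  assumes "0 < k" "hub_labeling {0..<k * k} (rook k) L"
    and "\<forall>v\<in>{0..<k * k}. \<forall>u\<in>L v. \<pi> u \<le> \<pi> v"
  shows "rook_min_diagonals k \<pi> \<subseteq> Sigma {0..<k * k} L"
proof (rule subrelI)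
  fix x y assume "(x, y) \<in> rook_min_diagonals k \<pi>"
  then have xy: "x < k * k" "y < k * k" "x div k \<noteq> y div k" "x mod k \<noteq> y mod k"
    and least: "\<forall>z \<in> rook_rectangle k x y. z \<noteq> y \<longrightarrow> \<pi> y < \<pi> z"
    unfolding rook_min_diagonals_def rook_diagonals_def by auto
  have "y \<in> L x"
  proof (rule mem_label_if_least_on_shortest_paths[OF assms(2,3)])
    show "x \<in> {0..<k * k}" "y \<in> {0..<k * k}"
      using xy by auto
    fix p z assume "shortest_path {0..<k * k} (rook k) x y p" "z \<in> set p" "z \<noteq> y"
    then show "\<pi> y < \<pi> z"
      using least rook_shortest_path_in_rectangle[OF assms(1) xy] by blast
  qed
  with xy show "(x, y) \<in> Sigma {0..<k * k} L"
    by simp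
qed

lemma card_rook_symmetries_le: "card (rook_symmetries k) \<le> 4"
  using card_length[of "[id, prod.swap, rook_flip k, prod.swap \<circ> rook_flip k]"]
  by (simp add: rook_symmetries_def)

lemma hl_size_rook_hierarchical_ge:
  assumes "0 < k" "hub_labeling {0..<k * k} (rook k) L" "hierarchical {0..<k * k} L"
  shows "(k * (k - 1)) ^ 2 \<le> 4 * hl_size {0..<k * k} L"
proof -
  obtain \<pi> where bij: "bij_betw \<pi> {0..<k * k} {1..card {0..<k * k}}"
    and mono: "\<forall>v\<in>{0..<k * k}. \<forall>u\<in>L v. \<pi> u \<le> \<pi> v"
    using assms(3) unfolding hierarchical_def by blast
  let ?Q = "rook_min_diagonals k \<pi>" and ?S = "rook_symmetries k"
  have Q_labels: "?Q \<subseteq> Sigma {0..<k * k} L"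
    using rook_min_diagonals_in_labels[OF assms(1,2) mono] .
  have "finite (Sigma {0..<k * k} L)"
    using assms(2) unfolding hub_labeling_def by (auto intro: finite_subset)
  then have fin_Q: "finite ?Q"
    using Q_labels finite_subset by blast
  have fin_S: "finite ?S"
    by (simp add: rook_symmetries_def)
  have "(k * (k - 1)) ^ 2 = card (rook_diagonals k)"
    by (rule card_rook_diagonals[symmetric])
  also have "\<dots> \<le> card (\<Union>g\<in>?S. g ` ?Q)"
    using rook_diagonals_cover[OF assms(1) bij_betw_imp_inj_on[OF bij]] fin_Q fin_S
    by (intro card_mono) auto
  also have "\<dots> \<le> (\<Sum>g\<in>?S. card (g ` ?Q))"
    using fin_S by (rule card_UN_le)
  also have "\<dots> \<le> card ?S * card ?Q"
    using card_image_le[OF fin_Q] by (metis of_nat_id sum_bounded_above)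
  also have "\<dots> \<le> 4 * card (Sigma {0..<k * k} L)"
    using card_rook_symmetries_le card_mono[OF \<open>finite (Sigma {0..<k * k} L)\<close> Q_labels]
    by (intro mult_le_mono)
  also have "\<dots> = 4 * hl_size {0..<k * k} L"
    using assms(2) unfolding hub_labeling_def by (simp add: card_Sigma_eq_hl_size)
  finally show ?thesis .
qed

lemma hub_labeling_closed_nbhd_rook:
  "0 < k \<Longrightarrow> hub_labeling {0..<k * k} (rook k) (closed_nbhd {0..<k * k} (rook k))"
  by (rule closed_nbhd_hub_labeling[OF undirected_graph_rook diameter_le_two_rook])

lemma connected_graph_rook: "0 < k \<Longrightarrow> connected_graph {0..<k * k} (rook k)"
  using hub_labeling_closed_nbhd_rook by (rule hub_labeling_imp_connected)

lemma min_hhl_size_rook_ge: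
  assumes "0 < k"
  shows "(k * (k - 1)) ^ 2 \<le> 4 * min_hhl_size {0..<k * k} (rook k)"
proof -
  obtain L where "hub_labeling {0..<k * k} (rook k) L" "hierarchical {0..<k * k} L"
    and "hl_size {0..<k * k} L = min_hhl_size {0..<k * k} (rook k)"
    using min_hhl_size_attained atMost_hierarchical_hub_labeling[OF connected_graph_rook[OF assms]]
    by metis
  then show ?thesis
    using hl_size_rook_hierarchical_ge[OF assms] by metis
qed

lemma min_hl_size_rook_le_min_hhl_size:
  assumes "2 \<le> k"
  shows "k * min_hl_size {0..<k * k} (rook k) \<le> 32 * min_hhl_size {0..<k * k} (rook k)"
proof -
  have "k \<le> 2 * (k - 1)"
    using assms by simp
  then have "k * k \<le> 4 * ((k - 1) * (k - 1))"
    using mult_le_mono[of k "2 * (k - 1)" k "2 * (k - 1)"] by simp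
  have "k * min_hl_size {0..<k * k} (rook k) \<le> k * (2 * k ^ 3)"
    using min_hl_size_rook_le assms by simp
  also have "\<dots> = 2 * (k * k) * (k * k)"
    by (simp add: power3_eq_cube)
  also have "\<dots> \<le> 2 * (k * k) * (4 * ((k - 1) * (k - 1)))"
    using \<open>k * k \<le> 4 * ((k - 1) * (k - 1))\<close> by (intro mult_le_mono2)
  also have "\<dots> = 8 * (k * (k - 1)) ^ 2"
    by (simp add: power2_eq_square algebra_simps)
  also have "\<dots> \<le> 32 * min_hhl_size {0..<k * k} (rook k)"
    using min_hhl_size_rook_ge assms by fastforce
  finally show ?thesis .
qed

theorem mainTheorem14:
  shows "\<exists>c::real. c > 0 \<and> (\<forall>N::nat. \<exists>n\<ge>N. \<exists>E :: nat \<Rightarrow> nat \<Rightarrow> bool.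
           undirected_graph {0..<n} E \<and> connected_graph {0..<n} E \<and>
           real (min_hhl_size {0..<n} E) \<ge> c * sqrt (real n) * real (min_hl_size {0..<n} E))"
proof (intro exI[of _ "1/32"] conjI allI)
  fix N :: nat
  define k where "k = N + 2"
  have "N \<le> k * k"
    unfolding k_def by (simp add: algebra_simps)
  moreover have "connected_graph {0..<k * k} (rook k)"
    by (rule connected_graph_rook) (simp add: k_def)
  moreover have "1/32 * sqrt (real (k * k)) * real (min_hl_size {0..<k * k} (rook k))
      \<le> real (min_hhl_size {0..<k * k} (rook k))"
  proof -
    have "2 \<le> k"
      unfolding k_def by simp
    then have "real (k * min_hl_size {0..<k * k} (rook k)) \<le> real (32 * min_hhl_size {0..<k * k} (rook k))"
      using min_hl_size_rook_le_min_hhl_size of_nat_le_iff by blast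
    then show ?thesis
      by simp
  qed
  ultimately show "\<exists>n\<ge>N. \<exists>E :: nat \<Rightarrow> nat \<Rightarrow> bool.
           undirected_graph {0..<n} E \<and> connected_graph {0..<n} E \<and>
           real (min_hhl_size {0..<n} E) \<ge> 1/32 * sqrt (real n) * real (min_hl_size {0..<n} E)"
    using undirected_graph_rook by blast
qed simp

end
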